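(* Let $L$ be an $S$-Noetherian lattice, where $S$ is a multiplicatively closed subset of $L$ with $1\in S$, $0\notin S$. Then every $S$-irreducible element of $L$ is $S$-primary.
   Context: A multiplicative lattice is a complete lattice with a commutative, associative multiplication distributing over arbitrary joins, with $1$ as identity; $L_*$ is the set of compact elements; $(a:b)=\bigvee\{x\mid xb\le a\}$. An element $m$ is meet principal if $a\wedge mb=m((a:m)\wedge b)$ for all $a,b$, join principal if $a\vee(b:m)=(am\vee b):m$ for all $a,b$, and principal if both. An $r$-lattice is a modular, principally generated, compactly generated multiplicative lattice with $1$ compact. A multiplicatively closed subset is a nonempty $S\subseteq L_*$ closed under multiplication. An element $a$ is $S$-compact if $sa\le b\le a$ for some compact $b$ and some $s\in S$; an $S$-Noetherian lattice is an $r$-lattice in which every element is $S$-compact. $\sqrt a=\bigvee\{x\in L_*\mid x^n\le a\text{ for some }n\in\mathbb{Z}^+\}$. An element $q$ with $t\not\le q$ for all $t\in S$ is $S$-irreducible if whenever $s(a\wedge b)\le q\le a\wedge b$ for some $s\in S$ and $a,b\in L$, there exists $s'\in S$ with $ss'a\le q$ or $ss'b\le q$. A proper element $q$ with $t\not\le q$ for all $t\in S$ is $S$-primary if there exists $s\in S$ such that for all $c,d\in L$, $cd\le q$ implies $sc\le q$ or $sd\le\sqrt q$. *)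

theory Defs
  imports Main
begin

definition mult_lattice :: "('a::complete_lattice \<Rightarrow> 'a \<Rightarrow> 'a) \<Rightarrow> bool" where
  "mult_lattice mul \<longleftrightarrow>
     (\<forall>a b. mul a b = mul b a) \<and>
     (\<forall>a b c. mul (mul a b) c = mul a (mul b c)) \<and>
     (\<forall>a X. mul a (Sup X) = Sup ((\<lambda>x. mul a x) ` X)) \<and>
     (\<forall>a. mul top a = a)"

definition compact_el :: "'a::complete_lattice \<Rightarrow> bool" where
  "compact_el x \<longleftrightarrow> (\<forall>X. x \<le> Sup X \<longrightarrow> (\<exists>F. finite F \<and> F \<subseteq> X \<and> x \<le> Sup F))"

definition residual :: "('a::complete_lattice \<Rightarrow> 'a \<Rightarrow> 'a) \<Rightarrow> 'a \<Rightarrow> 'a \<Rightarrow> 'a" where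
  "residual mul a b = Sup {x. mul x b \<le> a}"

definition meet_principal :: "('a::complete_lattice \<Rightarrow> 'a \<Rightarrow> 'a) \<Rightarrow> 'a \<Rightarrow> bool" where
  "meet_principal mul m \<longleftrightarrow>
     (\<forall>a b. inf a (mul m b) = mul m (inf (residual mul a m) b))"

definition join_principal :: "('a::complete_lattice \<Rightarrow> 'a \<Rightarrow> 'a) \<Rightarrow> 'a \<Rightarrow> bool" where
  "join_principal mul m \<longleftrightarrow>
     (\<forall>a b. sup a (residual mul b m) = residual mul (sup (mul a m) b) m)"

definition principal_el :: "('a::complete_lattice \<Rightarrow> 'a \<Rightarrow> 'a) \<Rightarrow> 'a \<Rightarrow> bool" where
  "principal_el mul m \<longleftrightarrow> meet_principal mul m \<and> join_principal mul m"

definition r_lattice :: "('a::complete_lattice \<Rightarrow> 'a \<Rightarrow> 'a) \<Rightarrow> bool" where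
  "r_lattice (mul::'a \<Rightarrow> 'a \<Rightarrow> 'a) \<longleftrightarrow>
     mult_lattice mul \<and>
     (\<forall>a b c::'a. a \<le> c \<longrightarrow> sup a (inf b c) = inf (sup a b) c) \<and>
     (\<forall>x. x = Sup {y. principal_el mul y \<and> y \<le> x}) \<and>
     (\<forall>x::'a. x = Sup {y. compact_el y \<and> y \<le> x}) \<and>
     compact_el (top::'a)"

definition mult_closed :: "('a::complete_lattice \<Rightarrow> 'a \<Rightarrow> 'a) \<Rightarrow> 'a set \<Rightarrow> bool" where
  "mult_closed mul S \<longleftrightarrow> S \<noteq> {} \<and> (\<forall>s\<in>S. compact_el s) \<and>
     (\<forall>s\<in>S. \<forall>t\<in>S. mul s t \<in> S)"

definition S_compact :: "('a::complete_lattice \<Rightarrow> 'a \<Rightarrow> 'a) \<Rightarrow> 'a set \<Rightarrow> 'a \<Rightarrow> bool" where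
  "S_compact mul S a \<longleftrightarrow> (\<exists>s\<in>S. \<exists>b. compact_el b \<and> mul s a \<le> b \<and> b \<le> a)"

definition S_Noetherian :: "('a::complete_lattice \<Rightarrow> 'a \<Rightarrow> 'a) \<Rightarrow> 'a set \<Rightarrow> bool" where
  "S_Noetherian mul S \<longleftrightarrow> r_lattice mul \<and> (\<forall>a. S_compact mul S a)"

primrec mpow :: "('a::complete_lattice \<Rightarrow> 'a \<Rightarrow> 'a) \<Rightarrow> 'a \<Rightarrow> nat \<Rightarrow> 'a" where
  "mpow mul x 0 = top"
| "mpow mul x (Suc n) = mul x (mpow mul x n)"

definition radical :: "('a::complete_lattice \<Rightarrow> 'a \<Rightarrow> 'a) \<Rightarrow> 'a \<Rightarrow> 'a" where
  "radical mul a = Sup {x. compact_el x \<and> (\<exists>n::nat. n > 0 \<and> mpow mul x n \<le> a)}"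

definition S_irreducible :: "('a::complete_lattice \<Rightarrow> 'a \<Rightarrow> 'a) \<Rightarrow> 'a set \<Rightarrow> 'a \<Rightarrow> bool" where
  "S_irreducible mul S q \<longleftrightarrow>
     (\<forall>t\<in>S. \<not> t \<le> q) \<and>
     (\<forall>s\<in>S. \<forall>a b. mul s (inf a b) \<le> q \<and> q \<le> inf a b \<longrightarrow>
        (\<exists>s'\<in>S. mul (mul s s') a \<le> q \<or> mul (mul s s') b \<le> q))"

definition S_primary :: "('a::complete_lattice \<Rightarrow> 'a \<Rightarrow> 'a) \<Rightarrow> 'a set \<Rightarrow> 'a \<Rightarrow> bool" where
  "S_primary mul S q \<longleftrightarrow>
     q \<noteq> top \<and> (\<forall>t\<in>S. \<not> t \<le> q) \<and>
     (\<exists>s\<in>S. \<forall>c d. mul c d \<le> q \<longrightarrow> mul s c \<le> q \<or> mul s d \<le> radical mul q)"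

end

theory Submission
  imports Defs
begin

text \<open>Since every element is S-compact, the ascending chain of residuals (q : d^n) of a meet
  principal d becomes stationary up to a multiplier s \<in> S at some stage K. Modularity and meet
  principality then give s ((q \<squnion> d^K) \<sqinter> (q : d^K)) \<le> q, and S-irreducibility of q yields an
  element of S that kills either d^K or every c with c d \<le> q modulo q. Applying S-compactness
  once more to the directed join of all (q : t), t \<in> S, produces a single u \<in> S that works
  for all c and d; passing from principal elements to arbitrary d uses principal generation,
  and passing from d^K to the radical uses compact generation.\<close>

lemma compact_el_le_directed_Sup:
  assumes "compact_el b" and "D \<noteq> {}"
    and directed: "\<And>x y. x \<in> D \<Longrightarrow> y \<in> D \<Longrightarrow> \<exists>z\<in>D. x \<le> z \<and> y \<le> z"
    and "b \<le> Sup D"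
  shows "\<exists>z\<in>D. b \<le> z"
proof -
  obtain F where F: "finite F" "F \<subseteq> D" "b \<le> Sup F"
    using assms(1,4) unfolding compact_el_def by blast
  have "\<exists>z\<in>D. \<forall>x\<in>F. x \<le> z" using F(1,2)
  proof (induction F rule: finite_induct)
    case empty
    then show ?case using \<open>D \<noteq> {}\<close> by auto
  next
    case (insert x F)
    then obtain z where z: "z \<in> D" "\<forall>y\<in>F. y \<le> z" by auto
    obtain w where "w \<in> D" "x \<le> w" "z \<le> w" using directed[of x z] insert z by auto
    then show ?case using z by (intro bexI[of _ w]) (auto intro: order_trans)
  qed
  then show ?thesis using F(3) by (meson Sup_least order_trans)
qed

lemma S_compact_directed_Sup:
  assumes "S_compact mul S (Sup D)" and "D \<noteq> {}"
    and "\<And>x y. x \<in> D \<Longrightarrow> y \<in> D \<Longrightarrow> \<exists>z\<in>D. x \<le> z \<and> y \<le> z"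
  shows "\<exists>s\<in>S. \<exists>z\<in>D. mul s (Sup D) \<le> z"
proof -
  obtain s b where "s \<in> S" "compact_el b" "mul s (Sup D) \<le> b" "b \<le> Sup D"
    using assms(1) unfolding S_compact_def by blast
  then show ?thesis using compact_el_le_directed_Sup[OF _ assms(2,3)] by (meson order_trans)
qed

locale multiplicative_lattice =
  fixes mul :: "'a::complete_lattice \<Rightarrow> 'a \<Rightarrow> 'a"
  assumes mult_lattice: "mult_lattice mul"
begin

lemma mul_commute: "mul a b = mul b a"
  using mult_lattice unfolding mult_lattice_def by blast

lemma mul_assoc: "mul (mul a b) c = mul a (mul b c)"
  using mult_lattice unfolding mult_lattice_def by blast

lemma mul_left_commute: "mul a (mul b c) = mul b (mul a c)"
  by (metis mul_assoc mul_commute)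

lemma mul_Sup: "mul a (Sup X) = Sup ((\<lambda>x. mul a x) ` X)"
  using mult_lattice unfolding mult_lattice_def by blast

lemma mul_top_left [simp]: "mul top a = a"
  using mult_lattice unfolding mult_lattice_def by blast

lemma mul_top_right [simp]: "mul a top = a"
  using mul_top_left mul_commute by metis

lemma mul_sup: "mul a (sup b c) = sup (mul a b) (mul a c)"
  using mul_Sup[of a "{b, c}"] by simp

lemma mul_mono_right: "a \<le> b \<Longrightarrow> mul c a \<le> mul c b"
  by (metis mul_sup sup.absorb_iff2)

lemma mul_mono_left: "a \<le> b \<Longrightarrow> mul a c \<le> mul b c"
  using mul_mono_right mul_commute by metis

lemma mul_le_left: "mul a b \<le> a"
  using mul_mono_right[of b top a] by simp

lemma mul_le_right: "mul a b \<le> b"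
  using mul_le_left mul_commute by metis

lemma le_residual_iff: "x \<le> residual mul a b \<longleftrightarrow> mul x b \<le> a"
proof
  assume "x \<le> residual mul a b"
  then have "mul x b \<le> mul b (Sup {x. mul x b \<le> a})"
    unfolding residual_def by (metis mul_commute mul_mono_left)
  also have "\<dots> = Sup ((\<lambda>x. mul b x) ` {x. mul x b \<le> a})" by (rule mul_Sup)
  also have "\<dots> \<le> a" by (auto intro!: Sup_least simp: mul_commute)
  finally show "mul x b \<le> a" .
next
  assume "mul x b \<le> a"
  then show "x \<le> residual mul a b" unfolding residual_def by (auto intro: Sup_upper)
qed

lemma residual_top_right [simp]: "residual mul a top = a"
  by (metis le_residual_iff mul_top_right order.antisym order.refl)

lemma residual_residual: "residual mul (residual mul a b) c = residual mul a (mul b c)"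
proof -
  have "x \<le> residual mul (residual mul a b) c \<longleftrightarrow> x \<le> residual mul a (mul b c)" for x
    by (simp add: le_residual_iff mul_assoc mul_commute mul_left_commute)
  then show ?thesis by (meson order.antisym order.refl)
qed

lemma residual_le_residual_mul: "residual mul a b \<le> residual mul a (mul b c)"
  by (metis le_residual_iff mul_commute mul_le_left order.refl order_trans)

lemma mpow_add: "mpow mul x (m + n) = mul (mpow mul x m) (mpow mul x n)"
  by (induction m) (simp_all add: mul_assoc)

lemma mpow_mul_distrib: "mpow mul (mul x y) n = mul (mpow mul x n) (mpow mul y n)"
  by (induction n) (simp_all add: mul_assoc mul_left_commute)

lemma mpow_le_self: "0 < n \<Longrightarrow> mpow mul x n \<le> x"
  by (cases n) (simp_all add: mul_le_left)

lemma mpow_mono: "x \<le> y \<Longrightarrow> mpow mul x n \<le> mpow mul y n"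
  by (induction n) (simp_all, meson mul_mono_left mul_mono_right order_trans)

lemma residual_mpow_mono: "m \<le> n \<Longrightarrow> residual mul a (mpow mul d m) \<le> residual mul a (mpow mul d n)"
  by (metis le_Suc_ex mpow_add residual_le_residual_mul)

lemma meet_principal_inf_mpow:
  assumes "meet_principal mul d"
  shows "inf a (mpow mul d n) = mul (mpow mul d n) (residual mul a (mpow mul d n))"
proof (induction n arbitrary: a)
  case 0
  then show ?case by simp
next
  case (Suc n)
  have "inf a (mpow mul d (Suc n)) = mul d (inf (residual mul a d) (mpow mul d n))"
    using assms unfolding meet_principal_def by simp
  also have "\<dots> = mul (mpow mul d (Suc n)) (residual mul a (mpow mul d (Suc n)))"
    using Suc by (simp add: residual_residual mul_assoc)
  finally show ?case .
qed

lemma le_radical_of_mpow_le: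
  assumes compactly_generated: "\<And>z::'a. z = Sup {y. compact_el y \<and> y \<le> z}"
    and "0 < k" and "mpow mul x k \<le> q"
  shows "x \<le> radical mul q"
proof -
  have "y \<le> radical mul q" if "compact_el y" "y \<le> x" for y
  proof -
    have "mpow mul y k \<le> q" using mpow_mono[OF \<open>y \<le> x\<close>] assms(3) by (rule order_trans)
    then show ?thesis
      unfolding radical_def using that(1) \<open>0 < k\<close> by (intro Sup_upper) auto
  qed
  then have "Sup {y. compact_el y \<and> y \<le> x} \<le> radical mul q" by (intro Sup_least) auto
  then show ?thesis using compactly_generated[of x] by simp
qed

lemma S_compact_residual_chain:
  assumes "\<forall>a. S_compact mul S a"
  shows "\<exists>s\<in>S. \<exists>K>0. \<forall>n. mul s (residual mul q (mpow mul d n)) \<le> residual mul q (mpow mul d K)"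
proof -
  define R where "R n = residual mul q (mpow mul d n)" for n
  have R_mono: "m \<le> n \<Longrightarrow> R m \<le> R n" for m n
    unfolding R_def by (rule residual_mpow_mono)
  have "\<exists>z\<in>range R. x \<le> z \<and> y \<le> z" if xy: "x \<in> range R" "y \<in> range R" for x y
  proof -
    obtain i j where "x = R i" "y = R j" using xy by blast
    then show ?thesis using R_mono[of i "max i j"] R_mono[of j "max i j"] by auto
  qed
  then obtain s k where "s \<in> S" and sk: "mul s (Sup (range R)) \<le> R k"
    using S_compact_directed_Sup[of mul S "range R"] assms by blast
  have "mul s (R n) \<le> R (Suc k)" for n
    using mul_mono_right[of "R n" "Sup (range R)" s] sk R_mono[of k "Suc k"]
    by (meson SUP_upper UNIV_I le_SucI order_trans order.refl)
  then show ?thesis using \<open>s \<in> S\<close> unfolding R_def by blast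
qed

lemma S_irreducible_meet_principal_dichotomy:
  assumes modular: "\<And>a b c::'a. a \<le> c \<Longrightarrow> sup a (inf b c) = inf (sup a b) c"
    and "\<forall>a. S_compact mul S a" and "mult_closed mul S"
    and irreducible: "S_irreducible mul S q"
    and "meet_principal mul d" and "mul c d \<le> q"
  shows "(\<exists>t\<in>S. mul t c \<le> q) \<or> (\<exists>t\<in>S. \<exists>k>0. mul t (mpow mul d k) \<le> q)"
proof -
  define R where "R n = residual mul q (mpow mul d n)" for n
  obtain s K where "s \<in> S" "0 < K" and stationary: "\<And>n. mul s (R n) \<le> R K"
    using S_compact_residual_chain[OF assms(2)] unfolding R_def by blast
  define A where "A = sup q (mpow mul d K)"
  have "q \<le> R K" unfolding R_def le_residual_iff by (rule mul_le_left)
  then have q_le: "q \<le> inf A (R K)" unfolding A_def by simp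
  have "inf (mpow mul d K) (R K) = mul (mpow mul d K) (R (K + K))"
    using meet_principal_inf_mpow[OF \<open>meet_principal mul d\<close>, of "R K" K]
    unfolding R_def by (simp add: inf_commute residual_residual mpow_add)
  then have "mul s (inf (mpow mul d K) (R K)) = mul (mpow mul d K) (mul s (R (K + K)))"
    by (simp add: mul_left_commute)
  also have "\<dots> \<le> mul (mpow mul d K) (R K)" by (rule mul_mono_right[OF stationary])
  also have "\<dots> \<le> q"
    using le_residual_iff[of "R K" q "mpow mul d K"] unfolding R_def by (simp add: mul_commute)
  finally have "mul s (inf (mpow mul d K) (R K)) \<le> q" .
  moreover have "inf A (R K) = sup q (inf (mpow mul d K) (R K))"
    using modular[OF \<open>q \<le> R K\<close>] unfolding A_def by simp
  ultimately have "mul s (inf A (R K)) \<le> q" by (simp add: mul_sup mul_le_right)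
  then obtain s' where "s' \<in> S" and s': "mul (mul s s') A \<le> q \<or> mul (mul s s') (R K) \<le> q"
    using irreducible \<open>s \<in> S\<close> q_le unfolding S_irreducible_def by blast
  have "mul s s' \<in> S" using \<open>mult_closed mul S\<close> \<open>s \<in> S\<close> \<open>s' \<in> S\<close>
    unfolding mult_closed_def by blast
  from s' show ?thesis
  proof
    assume "mul (mul s s') A \<le> q"
    moreover have "mul (mul s s') (mpow mul d K) \<le> mul (mul s s') A"
      unfolding A_def by (simp add: mul_mono_right)
    ultimately have "mul (mul s s') (mpow mul d K) \<le> q" by simp
    then show ?thesis using \<open>mul s s' \<in> S\<close> \<open>0 < K\<close> by blast
  next
    assume "mul (mul s s') (R K) \<le> q"
    moreover have "c \<le> R K"
      using \<open>mul c d \<le> q\<close> residual_mpow_mono[of 1 K q d] \<open>0 < K\<close>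
      unfolding R_def by (simp add: le_residual_iff[symmetric])
    ultimately have "mul (mul s s') c \<le> q" using mul_mono_right order_trans by blast
    then show ?thesis using \<open>mul s s' \<in> S\<close> by blast
  qed
qed

lemma exists_uniform_S_multiplier:
  assumes "\<forall>a. S_compact mul S a" and "mult_closed mul S"
  shows "\<exists>u\<in>S. \<forall>t\<in>S. \<forall>x. mul t x \<le> q \<longrightarrow> mul u x \<le> q"
proof -
  define D where "D = {residual mul q t | t. t \<in> S}"
  have "\<exists>z\<in>D. x \<le> z \<and> y \<le> z" if xy: "x \<in> D" "y \<in> D" for x y
  proof -
    obtain t1 t2 where "t1 \<in> S" "t2 \<in> S" "x = residual mul q t1" "y = residual mul q t2"
      using xy unfolding D_def by blast
    moreover have "residual mul q t2 \<le> residual mul q (mul t1 t2)"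
      using residual_le_residual_mul[of q t2 t1] by (simp add: mul_commute)
    moreover have "mul t1 t2 \<in> S"
      using assms(2) \<open>t1 \<in> S\<close> \<open>t2 \<in> S\<close> unfolding mult_closed_def by blast
    ultimately show ?thesis unfolding D_def using residual_le_residual_mul by blast
  qed
  moreover have "D \<noteq> {}" using assms(2) unfolding D_def mult_closed_def by blast
  ultimately obtain s t where "s \<in> S" "t \<in> S" and st: "mul s (Sup D) \<le> residual mul q t"
    using S_compact_directed_Sup[of mul S D] assms(1) unfolding D_def by blast
  have "mul (mul s t) x \<le> q" if "t' \<in> S" "mul t' x \<le> q" for t' x
  proof -
    have "x \<le> residual mul q t'" using \<open>mul t' x \<le> q\<close> by (simp add: le_residual_iff mul_commute)
    also have "\<dots> \<le> Sup D" using \<open>t' \<in> S\<close> unfolding D_def by (blast intro: Sup_upper)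
    finally have "mul s x \<le> residual mul q t" using st mul_mono_right order_trans by blast
    then show ?thesis by (simp add: le_residual_iff mul_commute mul_left_commute)
  qed
  moreover have "mul s t \<in> S" using assms(2) \<open>s \<in> S\<close> \<open>t \<in> S\<close> unfolding mult_closed_def by blast
  ultimately show ?thesis by blast
qed

lemma S_irreducible_primary_condition:
  assumes "r_lattice mul" and "\<forall>a. S_compact mul S a" and "mult_closed mul S"
    and "S_irreducible mul S q"
    and uniform: "\<And>t x. t \<in> S \<Longrightarrow> mul t x \<le> q \<Longrightarrow> mul u x \<le> q"
    and "mul c d \<le> q"
  shows "mul u c \<le> q \<or> mul u d \<le> radical mul q"
proof (cases "mul u c \<le> q")
  case True
  then show ?thesis ..
next
  case False
  have modular: "\<And>a b c::'a. a \<le> c \<Longrightarrow> sup a (inf b c) = inf (sup a b) c"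
    and principally_generated: "\<And>z::'a. z = Sup {y. principal_el mul y \<and> y \<le> z}"
    and compactly_generated: "\<And>z::'a. z = Sup {y. compact_el y \<and> y \<le> z}"
    using \<open>r_lattice mul\<close> unfolding r_lattice_def by auto
  have "mul u p \<le> radical mul q" if "principal_el mul p" "p \<le> d" for p
  proof -
    have "mul c p \<le> q" using mul_mono_right[OF \<open>p \<le> d\<close>] \<open>mul c d \<le> q\<close> by (rule order_trans)
    then obtain t k where "t \<in> S" "0 < k" "mul t (mpow mul p k) \<le> q"
      using S_irreducible_meet_principal_dichotomy[OF modular assms(2-4)] \<open>principal_el mul p\<close>
        False uniform unfolding principal_el_def by blast
    then have "mul u (mpow mul p k) \<le> q" using uniform by blast
    then have "mpow mul (mul u p) k \<le> q"
      unfolding mpow_mul_distrib using mul_mono_left[OF mpow_le_self[OF \<open>0 < k\<close>]] order_trans by blast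
    then show ?thesis by (rule le_radical_of_mpow_le[OF compactly_generated \<open>0 < k\<close>])
  qed
  then have "Sup ((\<lambda>x. mul u x) ` {y. principal_el mul y \<and> y \<le> d}) \<le> radical mul q"
    by (auto intro!: Sup_least)
  then show ?thesis using principally_generated[of d] mul_Sup by metis
qed

end

theorem mainTheorem6:
  fixes mul :: "'a::complete_lattice \<Rightarrow> 'a \<Rightarrow> 'a" and S :: "'a set" and q :: 'a
  assumes "S_Noetherian mul S"
    and "mult_closed mul S"
    and "top \<in> S" and "bot \<notin> S"
    and "S_irreducible mul S q"
  shows "S_primary mul S q"
proof -
  have "r_lattice mul" and S_compact: "\<forall>a. S_compact mul S a"
    using assms(1) unfolding S_Noetherian_def by auto
  then interpret multiplicative_lattice mul
    by unfold_locales (simp add: r_lattice_def)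
  obtain u where "u \<in> S" and uniform: "\<And>t x. t \<in> S \<Longrightarrow> mul t x \<le> q \<Longrightarrow> mul u x \<le> q"
    using exists_uniform_S_multiplier[OF S_compact assms(2)] by blast
  have avoids_S: "\<forall>t\<in>S. \<not> t \<le> q" using assms(5) unfolding S_irreducible_def by blast
  then have "q \<noteq> top" using \<open>top \<in> S\<close> by auto
  moreover have "mul u c \<le> q \<or> mul u d \<le> radical mul q" if "mul c d \<le> q" for c d
    using S_irreducible_primary_condition[OF \<open>r_lattice mul\<close> S_compact assms(2,5) uniform that] .
  ultimately show ?thesis unfolding S_primary_def using avoids_S \<open>u \<in> S\<close> by blast
qed

end
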